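(* Let $n=3$, $I_1=\{1,2\}$, $I_2=\{1,3\}$, and $f=f_1+f_2$ with $$f_1=8+\tfrac12x_1^2x_2^4+(x_1^2-2x_1^3)x_2^3+(2x_1+10x_1^2+4x_1^3+3x_1^4)x_2^2+4(x_1-2x_1^2)x_2,\qquad f_2=x_1^2x_3^2.$$ Then $f$ is nonnegative on $\mathbb R^3$, there are no $\sigma_1\in\Sigma[x(I_1)]$, $\sigma_2\in\Sigma[x(I_2)]$ with $f=\sigma_1+\sigma_2$, but there exist $\sigma_1\in\Sigma[x(I_1)]_7$, $\sigma_2\in\Sigma[x(I_2)]_7$ with $$f=\frac{\sigma_1}{\Theta_1^2}+\frac{\sigma_2}{\Theta_2^2},\qquad \Theta_1=(x_1^2+x_2^2+1)(x_1^2+1),\ \Theta_2=(x_1^2+x_3^2+1)(x_1^2+1).$$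
   Context: For $T\subseteq\{1,\dots,n\}$, $x(T)=(x_i)_{i\in T}$; $\Sigma[x(T)]$ is the set of sums of squares of polynomials in the variables $x(T)$, and $\Sigma[x(T)]_t$ those sums of squares of polynomials of degree at most $t$. *)

theory Defs
  imports Complex_Main
begin

text \<open>Real polynomials in two variables, represented by their polynomial functions
  (a real polynomial is determined by its function). poly2_deg t p: p is a
  polynomial of total degree at most t.\<close>
definition poly2_deg :: "nat \<Rightarrow> (real \<Rightarrow> real \<Rightarrow> real) \<Rightarrow> bool" where
  "poly2_deg t p \<longleftrightarrow>
     (\<exists>c :: nat \<Rightarrow> nat \<Rightarrow> real. \<forall>x y. p x y = (\<Sum>a\<le>t. \<Sum>b\<le>t - a. c a b * x ^ a * y ^ b))"

text \<open>Sigma[x(T)]_t for |T| = 2: sums of squares of polynomials of degree at most t.\<close>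
definition sos2_deg :: "nat \<Rightarrow> (real \<Rightarrow> real \<Rightarrow> real) \<Rightarrow> bool" where
  "sos2_deg t s \<longleftrightarrow>
     (\<exists>(m::nat) (ps :: nat \<Rightarrow> real \<Rightarrow> real \<Rightarrow> real).
        (\<forall>j<m. poly2_deg t (ps j)) \<and> (\<forall>x y. s x y = (\<Sum>j<m. (ps j x y)^2)))"

definition sos2 :: "(real \<Rightarrow> real \<Rightarrow> real) \<Rightarrow> bool" where
  "sos2 s \<longleftrightarrow> (\<exists>t. sos2_deg t s)"

definition f1 :: "real \<Rightarrow> real \<Rightarrow> real" where
  "f1 x1 x2 = 8 + (1/2) * x1^2 * x2^4 + (x1^2 - 2 * x1^3) * x2^3
     + (2 * x1 + 10 * x1^2 + 4 * x1^3 + 3 * x1^4) * x2^2 + 4 * (x1 - 2 * x1^2) * x2"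

definition f2 :: "real \<Rightarrow> real \<Rightarrow> real" where
  "f2 x1 x3 = x1^2 * x3^2"

definition f :: "real \<Rightarrow> real \<Rightarrow> real \<Rightarrow> real" where
  "f x1 x2 x3 = f1 x1 x2 + f2 x1 x3"

definition Theta1 :: "real \<Rightarrow> real \<Rightarrow> real" where
  "Theta1 x1 x2 = (x1^2 + x2^2 + 1) * (x1^2 + 1)"

definition Theta2 :: "real \<Rightarrow> real \<Rightarrow> real" where
  "Theta2 x1 x3 = (x1^2 + x3^2 + 1) * (x1^2 + 1)"

end

theory Submission
  imports Defs "HOL-Computational_Algebra.Polynomial"
begin

text \<open>With \<open>q = x1\<^sup>2 + x2\<^sup>2 + 1\<close> one has \<open>\<Theta>1\<^sup>2 = (x1\<^sup>2 + 1) \<cdot> ((x1 q)\<^sup>2 + q\<^sup>2)\<close>, so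
  \<open>f1 \<Theta>1\<^sup>2\<close> is a product of sums of squares once \<open>f1 \<cdot> (x1\<^sup>2 + 1)\<close> is one; the latter is
  certified by an explicit weighted sum of seven squares, which also gives \<open>f1 \<ge> 0\<close>.
  \<open>f2 \<Theta>2\<^sup>2\<close> is a single square.

  Conversely, \<open>f = \<sigma>1 + \<sigma>2\<close> would make \<open>f1 - g\<close> a sum of squares for \<open>g(x1) = \<sigma>2(x1, 0) \<ge> 0\<close>.
  As \<open>f1 - g\<close> is quartic in \<open>x2\<close>, every square is of a polynomial \<open>C + B x2 + A x2\<^sup>2\<close>
  with coefficients \<open>A, B, C\<close> polynomial in \<open>x1\<close>. Comparing coefficients forces
  \<open>A = \<alpha> x1\<close>, \<open>C = c\<close> constant (since \<open>\<Sum> C\<^sup>2 = 8 - g\<close> is bounded) and \<open>B = \<beta> x1 + \<gamma> x1\<^sup>2\<close>,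
  and determines the Gram matrix of the vectors \<open>(\<alpha>, \<beta>, \<gamma>, c)\<close> up to \<open>\<Sum> c\<^sup>2 \<le> 8\<close>;
  such a Gram matrix is never positive semidefinite.\<close>

lemma poly2_deg_add:
  assumes "poly2_deg t p" and "poly2_deg t q"
  shows "poly2_deg t (\<lambda>x y. p x y + q x y)"
proof -
  obtain c d where
    "\<forall>x y. p x y = (\<Sum>a\<le>t. \<Sum>b\<le>t - a. c a b * x ^ a * y ^ b)" and
    "\<forall>x y. q x y = (\<Sum>a\<le>t. \<Sum>b\<le>t - a. d a b * x ^ a * y ^ b)"
    using assms unfolding poly2_deg_def by blast
  then show ?thesis unfolding poly2_deg_def
    by (intro exI[of _ "\<lambda>a b. c a b + d a b"]) (simp add: sum.distrib[symmetric] distrib_right)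
qed

lemma poly2_deg_sum:
  assumes "finite A" and "\<And>i. i \<in> A \<Longrightarrow> poly2_deg t (p i)"
  shows "poly2_deg t (\<lambda>x y. \<Sum>i\<in>A. p i x y)"
  using assms
proof (induction A rule: finite_induct)
  case empty
  show ?case unfolding poly2_deg_def by (intro exI[of _ "\<lambda>_ _. 0"]) simp
next
  case (insert i A)
  then show ?case by (simp add: poly2_deg_add)
qed

lemma poly2_deg_monomial:
  assumes "a + b \<le> t"
  shows "poly2_deg t (\<lambda>x y. k * x ^ a * y ^ b)"
  unfolding poly2_deg_def
proof (intro exI[of _ "\<lambda>a' b'. if a' = a \<and> b' = b then k else 0"] allI)
  fix x y :: real
  have "(\<Sum>b'\<le>t - a'. (if a' = a \<and> b' = b then k else 0) * x ^ a' * y ^ b')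
      = (if a' = a then k * x ^ a * y ^ b else 0)" for a'
    using assms by (cases "a' = a") (simp_all add: if_distrib[where f="\<lambda>c. c * _"] cong: if_cong)
  then show "k * x ^ a * y ^ b =
      (\<Sum>a'\<le>t. \<Sum>b'\<le>t - a'. (if a' = a \<and> b' = b then k else 0) * x ^ a' * y ^ b')"
    using assms by simp
qed

lemma poly2_deg_mult:
  assumes "poly2_deg s p" and "poly2_deg t q"
  shows "poly2_deg (s + t) (\<lambda>x y. p x y * q x y)"
proof -
  obtain c d where
    p: "\<forall>x y. p x y = (\<Sum>a\<le>s. \<Sum>b\<le>s - a. c a b * x ^ a * y ^ b)" and
    q: "\<forall>x y. q x y = (\<Sum>a\<le>t. \<Sum>b\<le>t - a. d a b * x ^ a * y ^ b)"
    using assms unfolding poly2_deg_def by blast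
  have product: "(\<lambda>x y. p x y * q x y) = (\<lambda>x y. \<Sum>a\<le>s. \<Sum>a'\<le>t. \<Sum>b\<le>s - a. \<Sum>b'\<le>t - a'.
      (c a b * d a' b') * x ^ (a + a') * y ^ (b + b'))"
    unfolding p[rule_format] q[rule_format] sum_product by (simp add: power_add mult_ac)
  show ?thesis
    unfolding product by (intro poly2_deg_sum poly2_deg_monomial finite_atMost) auto
qed

lemma poly2_deg_scale:
  assumes "poly2_deg t p"
  shows "poly2_deg t (\<lambda>x y. k * p x y)"
  using poly2_deg_mult[OF poly2_deg_monomial[of 0 0 0 k] assms] by simp

lemma poly2_deg_diff:
  assumes "poly2_deg t p" and "poly2_deg t q"
  shows "poly2_deg t (\<lambda>x y. p x y - q x y)"
  using poly2_deg_add[OF assms(1) poly2_deg_scale[OF assms(2), of "-1"]] by simp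

lemma poly2_deg_mono:
  assumes "s \<le> t" and "poly2_deg s p"
  shows "poly2_deg t p"
  using poly2_deg_mult[OF poly2_deg_monomial[of 0 0 "t - s" 1] assms(2)] assms(1) by simp

lemma poly2_deg_x: "poly2_deg 1 (\<lambda>x y. x)"
  using poly2_deg_monomial[of 1 0 1 1] by simp

lemma poly2_deg_quadric: "poly2_deg 2 (\<lambda>x y. x^2 + y^2 + 1)"
  using poly2_deg_add[OF poly2_deg_add[OF poly2_deg_monomial[of 2 0 2 1] poly2_deg_monomial[of 0 2 2 1]]
      poly2_deg_monomial[of 0 0 2 1]]
  by simp

lemma sos2_deg_sum_squares:
  fixes q :: "'a \<Rightarrow> real \<Rightarrow> real \<Rightarrow> real"
  assumes "finite A" and "\<And>i. i \<in> A \<Longrightarrow> poly2_deg t (q i)"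
  shows "sos2_deg t (\<lambda>x y. \<Sum>i\<in>A. (q i x y)^2)"
proof -
  obtain h where h: "bij_betw h {..<card A} A"
    using ex_bij_betw_nat_finite[OF assms(1)] by (auto simp: atLeast0LessThan)
  show ?thesis
    unfolding sos2_deg_def
  proof (intro exI[of _ "card A"] exI[of _ "\<lambda>j. q (h j)"] conjI allI impI)
    show "poly2_deg t (q (h j))" if "j < card A" for j
      using assms(2) bij_betwE[OF h] that by blast
    show "(\<Sum>i\<in>A. (q i x y)^2) = (\<Sum>j<card A. (q (h j) x y)^2)" for x y
      using sum.reindex_bij_betw[OF h, of "\<lambda>i. (q i x y)^2"] by simp
  qed
qed

lemma sos2_deg_weighted_square:
  assumes "poly2_deg t q" and "0 \<le> c"
  shows "sos2_deg t (\<lambda>x y. c * (q x y)^2)"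
  using sos2_deg_sum_squares[of "{()}" t "\<lambda>_ x y. sqrt c * q x y"] assms
  by (simp add: poly2_deg_scale power_mult_distrib)

lemma sos2_deg_square: "poly2_deg t q \<Longrightarrow> sos2_deg t (\<lambda>x y. (q x y)^2)"
  using sos2_deg_weighted_square[of t q 1] by simp

lemma sos2_deg_add:
  assumes "sos2_deg t \<sigma>" and "sos2_deg t \<tau>"
  shows "sos2_deg t (\<lambda>x y. \<sigma> x y + \<tau> x y)"
proof -
  obtain m :: nat and p where p: "\<forall>j<m. poly2_deg t (p j)"
    and \<sigma>: "\<forall>x y. \<sigma> x y = (\<Sum>j<m. (p j x y)^2)"
    using assms(1) unfolding sos2_deg_def by blast
  obtain n :: nat and q where q: "\<forall>k<n. poly2_deg t (q k)"
    and \<tau>: "\<forall>x y. \<tau> x y = (\<Sum>k<n. (q k x y)^2)"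
    using assms(2) unfolding sos2_deg_def by blast
  have "sos2_deg t (\<lambda>x y. \<Sum>i\<in>{..<m} <+> {..<n}. (case_sum p q i x y)^2)"
    using p q by (intro sos2_deg_sum_squares) auto
  with \<sigma> \<tau> show ?thesis
    by (simp add: sum.Plus)
qed

lemma sos2_deg_mult:
  assumes "sos2_deg s \<sigma>" and "sos2_deg t \<tau>"
  shows "sos2_deg (s + t) (\<lambda>x y. \<sigma> x y * \<tau> x y)"
proof -
  obtain m :: nat and p where p: "\<forall>j<m. poly2_deg s (p j)"
    and \<sigma>: "\<forall>x y. \<sigma> x y = (\<Sum>j<m. (p j x y)^2)"
    using assms(1) unfolding sos2_deg_def by blast
  obtain n :: nat and q where q: "\<forall>k<n. poly2_deg t (q k)"
    and \<tau>: "\<forall>x y. \<tau> x y = (\<Sum>k<n. (q k x y)^2)"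
    using assms(2) unfolding sos2_deg_def by blast
  have "sos2_deg (s + t) (\<lambda>x y. \<Sum>i\<in>{..<m} \<times> {..<n}. (p (fst i) x y * q (snd i) x y)^2)"
    by (rule sos2_deg_sum_squares[of _ _ "\<lambda>i x y. p (fst i) x y * q (snd i) x y"])
      (use p q in \<open>auto intro: poly2_deg_mult\<close>)
  with \<sigma> \<tau> show ?thesis
    by (simp add: sum_product sum.cartesian_product power_mult_distrib case_prod_unfold)
qed

lemma sos2_deg_nonneg: "sos2_deg t s \<Longrightarrow> 0 \<le> s x y"
  unfolding sos2_deg_def by (auto intro!: sum_nonneg)

text \<open>The rows of an \<open>L D L\<^sup>T\<close> factorisation of a Gram matrix of \<open>f1 \<cdot> (x\<^sup>2 + 1)\<close> in the
  monomials \<open>1, x, x y, x y\<^sup>2, x\<^sup>2 y, x\<^sup>2 y\<^sup>2, x\<^sup>3 y\<close>; the weights in \<open>f1_times_ldl\<close> are the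
  diagonal of \<open>D\<close>. Every term is written as \<open>c * x^a * y^b\<close> to match \<open>poly2_deg_monomial\<close>.\<close>

definition ldl0 :: "real \<Rightarrow> real \<Rightarrow> real" where
  "ldl0 x y = 1 * x^0 * y^0 + 1/4 * x^1 * y^1 + 1/8 * x^1 * y^2 + 21/40 * x^2 * y^1
    - 1/25 * x^2 * y^2 + 3/10 * x^3 * y^1"

definition ldl1 :: "real \<Rightarrow> real \<Rightarrow> real" where
  "ldl1 x y = 1 * x^1 * y^0 - 41/40 * x^1 * y^1 - 11/400 * x^1 * y^2 - 1/20 * x^2 * y^1
    + 19/80 * x^2 * y^2 - 1/2 * x^3 * y^1"

definition ldl2 :: "real \<Rightarrow> real \<Rightarrow> real" where
  "ldl2 x y = 1 * x^1 * y^1 + 49/4350 * x^1 * y^2 - 24/145 * x^2 * y^1 - 1/30 * x^2 * y^2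
    - 4/261 * x^3 * y^1"

definition ldl3 :: "real \<Rightarrow> real \<Rightarrow> real" where
  "ldl3 x y = 1 * x^1 * y^2 + 47520/30841 * x^2 * y^1 + 101210/400933 * x^2 * y^2
    + 621100/1202799 * x^3 * y^1"

definition ldl4 :: "real \<Rightarrow> real \<Rightarrow> real" where
  "ldl4 x y = 1 * x^2 * y^1 + 703389/46892285 * x^2 * y^2 + 4462404/9378457 * x^3 * y^1"

definition ldl5 :: "real \<Rightarrow> real \<Rightarrow> real" where
  "ldl5 x y = 1 * x^2 * y^2 - 248206900/363049647 * x^3 * y^1"

definition ldl6 :: "real \<Rightarrow> real \<Rightarrow> real" where
  "ldl6 x y = 1 * x^3 * y^1"

lemma poly2_deg_ldl:
  "poly2_deg 4 ldl0" "poly2_deg 4 ldl1" "poly2_deg 4 ldl2" "poly2_deg 4 ldl3"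
  "poly2_deg 4 ldl4" "poly2_deg 4 ldl5" "poly2_deg 4 ldl6"
  unfolding ldl0_def ldl1_def ldl2_def ldl3_def ldl4_def ldl5_def ldl6_def
  by (intro poly2_deg_add poly2_deg_diff poly2_deg_monomial; simp)+

lemma f1_times_ldl:
  "f1 x y * (x^2 + 1) = 8 * (ldl0 x y)^2 + 8 * (ldl1 x y)^2 + 87/40 * (ldl2 x y)^2
    + 400933/1087500 * (ldl3 x y)^2 + 9378457/18504600 * (ldl4 x y)^2
    + 121016549/12191994100 * (ldl5 x y)^2 + 67310167/1089148941 * (ldl6 x y)^2"
  unfolding f1_def ldl0_def ldl1_def ldl2_def ldl3_def ldl4_def ldl5_def ldl6_def
  by algebra

lemma sos2_deg_f1_x2_plus_1: "sos2_deg 4 (\<lambda>x y. f1 x y * (x^2 + 1))"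
  unfolding f1_times_ldl
  by (intro sos2_deg_add sos2_deg_weighted_square poly2_deg_ldl) simp_all

lemma f1_nonneg: "0 \<le> f1 x y"
proof -
  have "0 \<le> f1 x y * (x^2 + 1)"
    by (rule sos2_deg_nonneg[OF sos2_deg_f1_x2_plus_1])
  moreover have "0 < x^2 + 1"
    by (simp add: add_nonneg_pos)
  ultimately show ?thesis
    by (simp add: zero_le_mult_iff)
qed

lemma Theta1_pos: "0 < Theta1 x y"
  unfolding Theta1_def by (intro mult_pos_pos add_nonneg_pos add_nonneg_nonneg) auto

lemma Theta2_pos: "0 < Theta2 x z"
  unfolding Theta2_def by (intro mult_pos_pos add_nonneg_pos add_nonneg_nonneg) auto

lemma sos2_deg_f1_Theta1: "sos2_deg 7 (\<lambda>x y. f1 x y * (Theta1 x y)^2)"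
proof -
  have "poly2_deg 3 (\<lambda>x y. x * (x^2 + y^2 + 1))"
    using poly2_deg_mult[OF poly2_deg_x poly2_deg_quadric] by (simp add: numeral_3_eq_3)
  then have "sos2_deg 3 (\<lambda>x y. (x * (x^2 + y^2 + 1))^2 + (x^2 + y^2 + 1)^2)"
    using poly2_deg_mono[OF _ poly2_deg_quadric, of 3] by (intro sos2_deg_add sos2_deg_square) simp_all
  moreover have "(\<lambda>x y. f1 x y * (Theta1 x y)^2) =
      (\<lambda>x y. f1 x y * (x^2 + 1) * ((x * (x^2 + y^2 + 1))^2 + (x^2 + y^2 + 1)^2))"
    unfolding Theta1_def by (intro ext) algebra
  ultimately show ?thesis
    using sos2_deg_mult[OF sos2_deg_f1_x2_plus_1] by fastforce
qed

lemma sos2_deg_f2_Theta2: "sos2_deg 7 (\<lambda>x z. f2 x z * (Theta2 x z)^2)"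
proof -
  have "poly2_deg 3 (\<lambda>x z. x * z)"
    using poly2_deg_monomial[of 1 1 3 1] by simp
  moreover have "poly2_deg 2 (\<lambda>x z. x^2 + 1)"
    using poly2_deg_add[OF poly2_deg_monomial[of 2 0 2 1] poly2_deg_monomial[of 0 0 2 1]] by simp
  ultimately have "poly2_deg 7 (\<lambda>x z. x * z * (x^2 + z^2 + 1) * (x^2 + 1))"
    using poly2_deg_mult[OF poly2_deg_mult[OF _ poly2_deg_quadric]] by fastforce
  moreover have "(\<lambda>x z. f2 x z * (Theta2 x z)^2) = (\<lambda>x z. (x * z * (x^2 + z^2 + 1) * (x^2 + 1))^2)"
    by (intro ext) (simp add: f2_def Theta2_def power_mult_distrib)
  ultimately show ?thesis
    using sos2_deg_square by fastforce
qed

lemma coeff_square_at_degree_bound: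
  fixes Q :: "'a::comm_ring_1 poly"
  assumes "degree Q \<le> D"
  shows "coeff (Q * Q) (2 * D) = (coeff Q D)^2"
proof (cases "degree Q = D")
  case True
  then show ?thesis using coeff_mult_degree_sum[of Q Q] by (simp add: power2_eq_square mult_2)
next
  case False
  with assms have "degree (Q * Q) < 2 * D" "degree Q < D"
    using degree_mult_le[of Q Q] by linarith+
  then show ?thesis by (simp add: coeff_eq_0)
qed

text \<open>The leading coefficients of the summands of highest degree cannot cancel in a sum of squares.\<close>

lemma sum_squares_summand_degree_le:
  fixes Q :: "nat \<Rightarrow> real poly"
  assumes sos: "\<And>x. (\<Sum>j<m. poly (Q j) x ^ 2) = poly P x" and "degree P \<le> 2 * d" and "j < m"
  shows "degree (Q j) \<le> d"
proof (rule ccontr)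
  assume "\<not> degree (Q j) \<le> d"
  define D where "D = Max ((\<lambda>i. degree (Q i)) ` {..<m})"
  have DQ: "degree (Q i) \<le> D" if "i < m" for i
    unfolding D_def using that by (intro Max_ge) auto
  have "D \<in> (\<lambda>i. degree (Q i)) ` {..<m}"
    unfolding D_def using \<open>j < m\<close> by (intro Max_in) auto
  then obtain i where i: "i < m" "degree (Q i) = D" by auto
  have "d < D" using DQ[OF \<open>j < m\<close>] \<open>\<not> degree (Q j) \<le> d\<close> by simp
  with i have "Q i \<noteq> 0" by auto
  with i have "coeff (Q i) D \<noteq> 0" by (metis leading_coeff_0_iff)
  have P: "P = (\<Sum>j<m. Q j * Q j)"
    using sos by (simp flip: poly_eq_poly_eq_iff add: fun_eq_iff poly_sum power2_eq_square)
  have "(coeff (Q i) D)^2 \<le> (\<Sum>j<m. (coeff (Q j) D)^2)"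
    using i by (intro member_le_sum) auto
  also have "\<dots> = coeff P (2 * D)"
    by (simp add: P coeff_sum coeff_square_at_degree_bound DQ)
  also have "\<dots> = 0"
    using \<open>degree P \<le> 2 * d\<close> \<open>d < D\<close> by (intro coeff_eq_0) linarith
  finally show False using \<open>coeff (Q i) D \<noteq> 0\<close> by simp
qed

lemma bounded_poly_degree_0:
  fixes p :: "real poly"
  assumes "\<And>x. \<bar>poly p x\<bar> \<le> B"
  shows "degree p = 0"
proof (rule ccontr)
  assume "degree p \<noteq> 0"
  then have "filterlim (\<lambda>x. norm (poly p x)) at_top at_infinity"
    by (intro filterlim_at_infinity_imp_norm_at_top filterlim_poly_at_infinity) simp
  then have "eventually (\<lambda>x. B + 1 \<le> norm (poly p x)) at_infinity"
    by (simp add: filterlim_at_top)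
  then obtain r where r: "\<And>x::real. r \<le> norm x \<Longrightarrow> B + 1 \<le> norm (poly p x)"
    unfolding eventually_at_infinity by blast
  from r[of "\<bar>r\<bar>"] assms[of "\<bar>r\<bar>"] show False by simp linarith
qed

lemma sum_squares_bounded_summand_degree_0:
  fixes Q :: "nat \<Rightarrow> real poly"
  assumes "\<And>x. (\<Sum>j<m. poly (Q j) x ^ 2) \<le> B" and "j < m"
  shows "degree (Q j) = 0"
proof -
  have "\<bar>poly (\<Sum>j<m. Q j * Q j) x\<bar> \<le> B" for x
    using assms(1)[of x] by (simp add: poly_sum power2_eq_square sum_nonneg)
  then have "degree (\<Sum>j<m. Q j * Q j) = 0"
    by (rule bounded_poly_degree_0)
  then show ?thesis
    using sum_squares_summand_degree_le[where P="\<Sum>j<m. Q j * Q j" and d=0] assms(2)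
    by (simp add: poly_sum power2_eq_square)
qed

lemma sum_squares_summand_root:
  fixes Q :: "nat \<Rightarrow> real poly"
  assumes "\<And>x. (\<Sum>j<m. poly (Q j) x ^ 2) = poly P x" and "poly P z = 0" and "j < m"
  shows "poly (Q j) z = 0"
proof -
  have "(\<Sum>j<m. poly (Q j) z ^ 2) = 0" using assms(1,2) by simp
  then show ?thesis using assms(3) by (subst (asm) sum_nonneg_eq_0_iff) auto
qed

lemma poly_degree_le_2:
  fixes p :: "'a::comm_semiring_1 poly"
  assumes "degree p \<le> 2"
  shows "poly p y = coeff p 0 + coeff p 1 * y + coeff p 2 * y^2"
proof -
  have "poly p y = (\<Sum>i\<le>2. coeff p i * y ^ i)"
    using assms by (simp add: poly_altdef sum.mono_neutral_left coeff_eq_0)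
  then show ?thesis by (simp add: numeral_2_eq_2)
qed

lemma degree_quartic_le: "degree [:a, b, c, d, e:] \<le> 4"
  by (simp add: degree_pCons_eq_if del: pCons_0_0)

lemma poly_quartic:
  fixes a b c d e y :: "'a::comm_ring_1"
  shows "poly [:a, b, c, d, e:] y = a + b * y + c * y^2 + d * y^3 + e * y^4"
  by (simp add: algebra_simps eval_nat_numeral)

lemma quartic_coeffs_eq:
  fixes a0 a1 a2 a3 a4 b0 b1 b2 b3 b4 :: real
  assumes "\<And>y. a0 + a1 * y + a2 * y^2 + a3 * y^3 + a4 * y^4 = b0 + b1 * y + b2 * y^2 + b3 * y^3 + b4 * y^4"
  shows "a0 = b0 \<and> a1 = b1 \<and> a2 = b2 \<and> a3 = b3 \<and> a4 = b4"
  using assms[of 0] assms[of 1] assms[of "-1"] assms[of 2] assms[of "-2"] by simp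

lemma sum_squares_quadratic_expand:
  fixes A B C :: "nat \<Rightarrow> real"
  shows "(\<Sum>j<m. (C j + B j * y + A j * y^2)^2) =
    (\<Sum>j<m. C j ^ 2) + (2 * (\<Sum>j<m. B j * C j)) * y + ((\<Sum>j<m. B j ^ 2) + 2 * (\<Sum>j<m. A j * C j)) * y^2
    + (2 * (\<Sum>j<m. A j * B j)) * y^3 + (\<Sum>j<m. A j ^ 2) * y^4"
proof -
  have "(C j + B j * y + A j * y^2)^2 = C j ^ 2 + (2 * (B j * C j)) * y + (B j ^ 2 + 2 * (A j * C j)) * y^2
    + (2 * (A j * B j)) * y^3 + A j ^ 2 * y^4" for j
    by algebra
  then show ?thesis
    by (simp add: sum.distrib sum_distrib_left sum_distrib_right ring_distribs)
qed

lemma poly2_deg_coeffs_in_y: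
  assumes "poly2_deg t p"
  obtains K :: "nat \<Rightarrow> real poly"
  where "\<And>b. t < b \<Longrightarrow> K b = 0" and "\<And>x y. p x y = (\<Sum>b\<le>t. poly (K b) x * y ^ b)"
proof -
  obtain c where c: "\<And>x y. p x y = (\<Sum>a\<le>t. \<Sum>b\<le>t - a. c a b * x ^ a * y ^ b)"
    using assms unfolding poly2_deg_def by blast
  define K where "K b = (if b \<le> t then \<Sum>a\<le>t - b. monom (c a b) a else 0)" for b
  have "K b = 0" if "t < b" for b
    using that by (simp add: K_def)
  moreover have "p x y = (\<Sum>b\<le>t. poly (K b) x * y ^ b)" for x y
  proof -
    have "p x y = (\<Sum>(a, b)\<in>Sigma {..t} (\<lambda>a. {..t - a}). c a b * x ^ a * y ^ b)"
      by (simp add: c sum.Sigma)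
    also have "Sigma {..t} (\<lambda>a. {..t - a}) = (\<lambda>(b, a). (a, b)) ` Sigma {..t} (\<lambda>b. {..t - b})"
      by auto
    also have "(\<Sum>(a, b)\<in>\<dots>. c a b * x ^ a * y ^ b) = (\<Sum>b\<le>t. \<Sum>a\<le>t - b. c a b * x ^ a * y ^ b)"
      by (subst sum.reindex) (auto simp: inj_on_def sum.Sigma case_prod_unfold)
    also have "\<dots> = (\<Sum>b\<le>t. poly (K b) x * y ^ b)"
      by (intro sum.cong) (simp_all add: K_def poly_sum poly_monom sum_distrib_right)
    finally show ?thesis .
  qed
  ultimately show ?thesis using that by blast
qed

lemma sos2_summands_degree_in_y:
  assumes "sos2 s" and "\<And>x. \<exists>P. degree P \<le> 2 * d \<and> (\<forall>y. s x y = poly P y)"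
  obtains m :: nat and K :: "nat \<Rightarrow> nat \<Rightarrow> real poly"
  where "\<And>x y. s x y = (\<Sum>j<m. (\<Sum>b\<le>d. poly (K j b) x * y ^ b) ^ 2)"
proof -
  obtain t m :: nat and ps where deg: "\<forall>j<m. poly2_deg t (ps j)"
    and s: "\<forall>x y. s x y = (\<Sum>j<m. (ps j x y)^2)"
    using assms(1) unfolding sos2_def sos2_deg_def by blast
  have "\<forall>j\<in>{..<m}. \<exists>Kj. (\<forall>b>t. Kj b = 0) \<and> (\<forall>x y. ps j x y = (\<Sum>b\<le>t. poly (Kj b) x * y ^ b))"
    using deg by (metis lessThan_iff poly2_deg_coeffs_in_y)
  then obtain K where K_high: "\<And>j b. j < m \<Longrightarrow> t < b \<Longrightarrow> K j b = 0"
    and ps: "\<And>j x y. j < m \<Longrightarrow> ps j x y = (\<Sum>b\<le>t. poly (K j b) x * y ^ b)"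
    by (metis lessThan_iff)
  define Q where "Q x j = (\<Sum>b\<le>t. monom (poly (K j b) x) b)" for x j
  have K_vanish: "poly (K j b) x = 0" if "j < m" and "d < b" for j b x
  proof -
    obtain P where P: "degree P \<le> 2 * d" "\<And>y. s x y = poly P y" using assms(2) by blast
    have "(\<Sum>j<m. poly (Q x j) y ^ 2) = poly P y" for y
      using s P(2)[of y] by (simp add: Q_def poly_sum poly_monom ps)
    then have "degree (Q x j) \<le> d"
      using sum_squares_summand_degree_le P(1) \<open>j < m\<close> by blast
    then have "coeff (Q x j) b = 0"
      using \<open>d < b\<close> by (simp add: coeff_eq_0)
    then show ?thesis
      using K_high[OF \<open>j < m\<close>, of b] by (cases "b \<le> t") (simp_all add: Q_def coeff_sum)
  qed
  have "ps j x y = (\<Sum>b\<le>d. poly (K j b) x * y ^ b)" if "j < m" for j x y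
  proof -
    have "ps j x y = (\<Sum>b\<le>t + d. poly (K j b) x * y ^ b)"
      unfolding ps[OF that] using K_high[OF that] by (intro sum.mono_neutral_left) auto
    also have "\<dots> = (\<Sum>b\<le>d. poly (K j b) x * y ^ b)"
      using K_vanish[OF that] by (intro sum.mono_neutral_right) auto
    finally show ?thesis .
  qed
  then show ?thesis
    using that s by simp
qed

text \<open>The Gram matrix of the coefficient vectors is not positive semidefinite:
  at \<open>w = (100, -14, 44, 1)\<close> the quadratic form equals \<open>\<Sum> c\<^sub>j\<^sup>2 - 104 < 0\<close>.\<close>

lemma gram_infeasible:
  fixes \<alpha> \<beta> \<gamma> c :: "nat \<Rightarrow> real"
  assumes "(\<Sum>j<m. \<alpha> j * \<alpha> j) = 1/2" "(\<Sum>j<m. \<alpha> j * \<beta> j) = 1/2" "(\<Sum>j<m. \<alpha> j * \<gamma> j) = -1"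
    "(\<Sum>j<m. \<alpha> j * c j) = 1" "(\<Sum>j<m. \<beta> j * \<beta> j) = 10" "(\<Sum>j<m. \<beta> j * \<gamma> j) = 2"
    "(\<Sum>j<m. \<gamma> j * \<gamma> j) = 3" "(\<Sum>j<m. \<beta> j * c j) = 2" "(\<Sum>j<m. \<gamma> j * c j) = -4"
    "(\<Sum>j<m. c j * c j) \<le> 8"
  shows False
proof -
  have "(100 * \<alpha> j - 14 * \<beta> j + 44 * \<gamma> j + c j)^2 =
      10000 * (\<alpha> j * \<alpha> j) - 2800 * (\<alpha> j * \<beta> j) + 8800 * (\<alpha> j * \<gamma> j) + 200 * (\<alpha> j * c j)
    + 196 * (\<beta> j * \<beta> j) - 1232 * (\<beta> j * \<gamma> j) - 28 * (\<beta> j * c j)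
    + 1936 * (\<gamma> j * \<gamma> j) + 88 * (\<gamma> j * c j) + c j * c j" for j
    by algebra
  then have "(\<Sum>j<m. (100 * \<alpha> j - 14 * \<beta> j + 44 * \<gamma> j + c j)^2) = (\<Sum>j<m. c j * c j) - 104"
    using assms(1-9) by (simp add: sum.distrib sum_subtractf flip: sum_distrib_left)
  moreover have "0 \<le> (\<Sum>j<m. (100 * \<alpha> j - 14 * \<beta> j + 44 * \<gamma> j + c j)^2)"
    by (intro sum_nonneg) simp
  ultimately show False using assms(10) by linarith
qed

lemma quadratic_coefficients_infeasible:
  fixes \<alpha> \<beta> \<gamma> c :: "nat \<Rightarrow> real"
  assumes CC: "(\<Sum>j<m. c j ^ 2) \<le> 8"
    and BC: "\<And>x. 2 * (\<Sum>j<m. (\<beta> j * x + \<gamma> j * x^2) * c j) = 4*x - 8*x^2"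
    and BB: "\<And>x. (\<Sum>j<m. (\<beta> j * x + \<gamma> j * x^2) ^ 2) + 2 * (\<Sum>j<m. \<alpha> j * x * c j)
                  = 2*x + 10*x^2 + 4*x^3 + 3*x^4"
    and AB: "\<And>x. 2 * (\<Sum>j<m. \<alpha> j * x * (\<beta> j * x + \<gamma> j * x^2)) = x^2 - 2*x^3"
    and AA: "\<And>x. (\<Sum>j<m. (\<alpha> j * x) ^ 2) = x^2 / 2"
  shows False
proof (rule gram_infeasible)
  show "(\<Sum>j<m. \<alpha> j * \<alpha> j) = 1/2"
    using AA[of 1] by (simp add: power2_eq_square)
  have "(\<Sum>j<m. \<alpha> j * x * (\<beta> j * x + \<gamma> j * x^2)) =
      (\<Sum>j<m. \<alpha> j * \<beta> j * x^2 + \<alpha> j * \<gamma> j * x^3)" for x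
    by (simp add: algebra_simps power2_eq_square power3_eq_cube)
  then have AB_expand: "(\<Sum>j<m. \<alpha> j * x * (\<beta> j * x + \<gamma> j * x^2)) =
      (\<Sum>j<m. \<alpha> j * \<beta> j) * x^2 + (\<Sum>j<m. \<alpha> j * \<gamma> j) * x^3" for x
    by (simp add: sum.distrib sum_distrib_right)
  show "(\<Sum>j<m. \<alpha> j * \<beta> j) = 1/2" "(\<Sum>j<m. \<alpha> j * \<gamma> j) = -1"
    using AB[of 1, unfolded AB_expand] AB[of "-1", unfolded AB_expand] by simp_all
  have "(\<Sum>j<m. (\<beta> j * x + \<gamma> j * x^2) * c j) = (\<Sum>j<m. \<beta> j * c j * x + \<gamma> j * c j * x^2)" for x
    by (simp add: algebra_simps)
  then have BC_expand: "(\<Sum>j<m. (\<beta> j * x + \<gamma> j * x^2) * c j) =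
      (\<Sum>j<m. \<beta> j * c j) * x + (\<Sum>j<m. \<gamma> j * c j) * x^2" for x
    by (simp add: sum.distrib sum_distrib_right)
  show "(\<Sum>j<m. \<beta> j * c j) = 2" "(\<Sum>j<m. \<gamma> j * c j) = -4"
    using BC[of 1, unfolded BC_expand] BC[of "-1", unfolded BC_expand] by simp_all
  have "(\<Sum>j<m. (\<beta> j * x + \<gamma> j * x^2) ^ 2) =
      (\<Sum>j<m. \<beta> j * \<beta> j * x^2 + 2 * (\<beta> j * \<gamma> j) * x^3 + \<gamma> j * \<gamma> j * x^4)" for x
    by (simp add: algebra_simps power2_eq_square power3_eq_cube power4_eq_xxxx)
  moreover have "(\<Sum>j<m. \<alpha> j * x * c j) = (\<Sum>j<m. \<alpha> j * c j) * x" for x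
    by (simp add: sum_distrib_left mult_ac)
  ultimately have BB_expand: "(\<Sum>j<m. (\<beta> j * x + \<gamma> j * x^2) ^ 2) + 2 * (\<Sum>j<m. \<alpha> j * x * c j) =
      0 + (2 * (\<Sum>j<m. \<alpha> j * c j)) * x + (\<Sum>j<m. \<beta> j * \<beta> j) * x^2
      + (2 * (\<Sum>j<m. \<beta> j * \<gamma> j)) * x^3 + (\<Sum>j<m. \<gamma> j * \<gamma> j) * x^4" for x
    by (simp add: sum.distrib sum_distrib_right sum_distrib_left mult.assoc)
  have "0 + (2 * (\<Sum>j<m. \<alpha> j * c j)) * x + (\<Sum>j<m. \<beta> j * \<beta> j) * x^2
      + (2 * (\<Sum>j<m. \<beta> j * \<gamma> j)) * x^3 + (\<Sum>j<m. \<gamma> j * \<gamma> j) * x^4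
      = 0 + 2 * x + 10 * x^2 + 4 * x^3 + 3 * x^4" for x
    using BB[of x, unfolded BB_expand] by simp
  then have "(0::real) = 0 \<and> 2 * (\<Sum>j<m. \<alpha> j * c j) = 2 \<and> (\<Sum>j<m. \<beta> j * \<beta> j) = 10
      \<and> 2 * (\<Sum>j<m. \<beta> j * \<gamma> j) = 4 \<and> (\<Sum>j<m. \<gamma> j * \<gamma> j) = 3"
    by (rule quartic_coeffs_eq)
  then show "(\<Sum>j<m. \<alpha> j * c j) = 1" "(\<Sum>j<m. \<beta> j * \<beta> j) = 10"
    "(\<Sum>j<m. \<beta> j * \<gamma> j) = 2" "(\<Sum>j<m. \<gamma> j * \<gamma> j) = 3"
    by simp_all
  show "(\<Sum>j<m. c j * c j) \<le> 8"
    using CC by (simp add: power2_eq_square)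
qed

lemma coefficient_polys_infeasible:
  fixes A B C :: "nat \<Rightarrow> real poly"
  assumes CC: "\<And>x. (\<Sum>j<m. poly (C j) x ^ 2) \<le> 8"
    and BC: "\<And>x. 2 * (\<Sum>j<m. poly (B j) x * poly (C j) x) = 4*x - 8*x^2"
    and BB: "\<And>x. (\<Sum>j<m. poly (B j) x ^ 2) + 2 * (\<Sum>j<m. poly (A j) x * poly (C j) x)
                  = 2*x + 10*x^2 + 4*x^3 + 3*x^4"
    and AB: "\<And>x. 2 * (\<Sum>j<m. poly (A j) x * poly (B j) x) = x^2 - 2*x^3"
    and AA: "\<And>x. (\<Sum>j<m. poly (A j) x ^ 2) = x^2 / 2"
  shows False
proof -
  define \<alpha> where "\<alpha> j = coeff (A j) 1" for j
  define \<beta> where "\<beta> j = coeff (B j) 1" for j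
  define \<gamma> where "\<gamma> j = coeff (B j) 2" for j
  define c where "c j = coeff (C j) 0" for j
  have AA': "(\<Sum>j<m. poly (A j) x ^ 2) = poly [:0, 0, 1/2:] x" for x
    using AA[of x] by (simp add: power2_eq_square)
  have A: "poly (A j) x = \<alpha> j * x" if "j < m" for j x
  proof -
    have "degree (A j) \<le> 1"
      using sum_squares_summand_degree_le[OF AA' _ that, of 1] by simp
    moreover have "poly (A j) 0 = 0"
      using sum_squares_summand_root[OF AA' _ that] by simp
    ultimately show ?thesis
      using poly_degree_le_2[of "A j" x] by (simp add: \<alpha>_def poly_0_coeff_0 coeff_eq_0)
  qed
  have C: "poly (C j) x = c j" if "j < m" for j x
    using sum_squares_bounded_summand_degree_0[OF CC that] poly_degree_le_2[of "C j" x]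
    by (simp add: c_def coeff_eq_0)
  have AC: "(\<Sum>j<m. poly (A j) x * poly (C j) x) = (\<Sum>j<m. \<alpha> j * c j) * x" for x
    by (simp add: A C sum_distrib_left mult_ac)
  have BB': "(\<Sum>j<m. poly (B j) x ^ 2) = poly [:0, 2 - 2 * (\<Sum>j<m. \<alpha> j * c j), 10, 4, 3:] x" for x
    using BB[of x, unfolded AC] by (simp add: algebra_simps power2_eq_square power3_eq_cube power4_eq_xxxx)
  have B: "poly (B j) x = \<beta> j * x + \<gamma> j * x^2" if "j < m" for j x
  proof -
    have "degree (B j) \<le> 2"
      using sum_squares_summand_degree_le[OF BB' _ that] degree_quartic_le by simp
    moreover have "poly (B j) 0 = 0"
      using sum_squares_summand_root[OF BB' _ that] by simp
    ultimately show ?thesis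
      using poly_degree_le_2[of "B j" x] by (simp add: \<beta>_def \<gamma>_def poly_0_coeff_0)
  qed
  show False
    by (rule quadratic_coefficients_infeasible[where \<alpha>=\<alpha> and \<beta>=\<beta> and \<gamma>=\<gamma> and c=c and m=m])
      (use CC BC BB AB AA in \<open>simp_all add: A B C\<close>)
qed

lemma f1_minus_const_in_y:
  "f1 x y - k = (8 - k) + (4*x - 8*x^2) * y + (2*x + 10*x^2 + 4*x^3 + 3*x^4) * y^2
    + (x^2 - 2*x^3) * y^3 + x^2/2 * y^4"
  unfolding f1_def by (simp add: field_simps)

lemma f1_minus_nonneg_not_sos2:
  assumes "sos2 s" and "\<And>x. 0 \<le> g x" and "\<And>x y. s x y = f1 x y - g x"
  shows False
proof -
  have "\<exists>P. degree P \<le> 2 * 2 \<and> (\<forall>y. s x y = poly P y)" for x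
  proof (intro exI conjI allI)
    show "degree [:8 - g x, 4*x - 8*x^2, 2*x + 10*x^2 + 4*x^3 + 3*x^4, x^2 - 2*x^3, x^2/2:] \<le> 2 * 2"
      using degree_quartic_le by simp
    show "s x y = poly [:8 - g x, 4*x - 8*x^2, 2*x + 10*x^2 + 4*x^3 + 3*x^4, x^2 - 2*x^3, x^2/2:] y" for y
      by (simp only: assms(3) f1_minus_const_in_y poly_quartic)
  qed
  then obtain m :: nat and K :: "nat \<Rightarrow> nat \<Rightarrow> real poly"
    where s: "\<And>x y. s x y = (\<Sum>j<m. (\<Sum>b\<le>2. poly (K j b) x * y ^ b) ^ 2)"
    by (rule sos2_summands_degree_in_y[OF assms(1)]) auto
  define A B C where "A j = K j 2" and "B j = K j 1" and "C j = K j 0" for j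
  have squares_in_y: "(\<Sum>j<m. (poly (C j) x + poly (B j) x * y + poly (A j) x * y^2)^2) = f1 x y - g x"
    for x y
    using s[of x y] assms(3)[of x y] by (simp add: A_def B_def C_def numeral_2_eq_2)
  have "(\<Sum>j<m. poly (C j) x ^ 2) + (2 * (\<Sum>j<m. poly (B j) x * poly (C j) x)) * y
      + ((\<Sum>j<m. poly (B j) x ^ 2) + 2 * (\<Sum>j<m. poly (A j) x * poly (C j) x)) * y^2
      + (2 * (\<Sum>j<m. poly (A j) x * poly (B j) x)) * y^3 + (\<Sum>j<m. poly (A j) x ^ 2) * y^4
    = (8 - g x) + (4*x - 8*x^2) * y + (2*x + 10*x^2 + 4*x^3 + 3*x^4) * y^2
      + (x^2 - 2*x^3) * y^3 + x^2/2 * y^4" for x y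
    unfolding squares_in_y[symmetric, unfolded f1_minus_const_in_y] sum_squares_quadratic_expand ..
  then have coeffs: "(\<Sum>j<m. poly (C j) x ^ 2) = 8 - g x
    \<and> 2 * (\<Sum>j<m. poly (B j) x * poly (C j) x) = 4*x - 8*x^2
    \<and> (\<Sum>j<m. poly (B j) x ^ 2) + 2 * (\<Sum>j<m. poly (A j) x * poly (C j) x)
        = 2*x + 10*x^2 + 4*x^3 + 3*x^4
    \<and> 2 * (\<Sum>j<m. poly (A j) x * poly (B j) x) = x^2 - 2*x^3
    \<and> (\<Sum>j<m. poly (A j) x ^ 2) = x^2/2" for x
    by (rule quartic_coeffs_eq)
  show False
  proof (rule coefficient_polys_infeasible[where A=A and B=B and C=C and m=m])
    show "(\<Sum>j<m. poly (C j) x ^ 2) \<le> 8" for x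
      using coeffs[of x] assms(2)[of x] by linarith
  qed (use coeffs in blast)+
qed

lemma f_nonneg: "0 \<le> f x1 x2 x3"
  using f1_nonneg[of x1 x2] by (simp add: f_def f2_def)

lemma f_not_sos2_split:
  assumes "sos2 s1" and "sos2 s2" and "\<And>x1 x2 x3. f x1 x2 x3 = s1 x1 x2 + s2 x1 x3"
  shows False
proof (rule f1_minus_nonneg_not_sos2[OF \<open>sos2 s1\<close>])
  show "0 \<le> s2 x 0" for x
    using \<open>sos2 s2\<close> unfolding sos2_def by (blast intro: sos2_deg_nonneg)
  show "s1 x y = f1 x y - s2 x 0" for x y
    using assms(3)[of x y 0] by (simp add: f_def f2_def)
qed

lemma f_eq_Theta_quotients:
  "f x1 x2 x3 = f1 x1 x2 * (Theta1 x1 x2)^2 / (Theta1 x1 x2)^2 + f2 x1 x3 * (Theta2 x1 x3)^2 / (Theta2 x1 x3)^2"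
  using Theta1_pos[of x1 x2] Theta2_pos[of x1 x3] by (simp add: f_def)

theorem mainTheorem9:
  shows "(\<forall>x1 x2 x3. f x1 x2 x3 \<ge> 0)
    \<and> \<not> (\<exists>s1 s2. sos2 s1 \<and> sos2 s2 \<and>
            (\<forall>x1 x2 x3. f x1 x2 x3 = s1 x1 x2 + s2 x1 x3))
    \<and> (\<exists>s1 s2. sos2_deg 7 s1 \<and> sos2_deg 7 s2 \<and>
            (\<forall>x1 x2 x3. f x1 x2 x3 = s1 x1 x2 / (Theta1 x1 x2)^2 + s2 x1 x3 / (Theta2 x1 x3)^2))"
proof (intro conjI)
  show "\<forall>x1 x2 x3. f x1 x2 x3 \<ge> 0"
    using f_nonneg by blast
  show "\<not> (\<exists>s1 s2. sos2 s1 \<and> sos2 s2 \<and> (\<forall>x1 x2 x3. f x1 x2 x3 = s1 x1 x2 + s2 x1 x3))"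
    using f_not_sos2_split by blast
  show "\<exists>s1 s2. sos2_deg 7 s1 \<and> sos2_deg 7 s2 \<and>
      (\<forall>x1 x2 x3. f x1 x2 x3 = s1 x1 x2 / (Theta1 x1 x2)^2 + s2 x1 x3 / (Theta2 x1 x3)^2)"
    using sos2_deg_f1_Theta1 sos2_deg_f2_Theta2 f_eq_Theta_quotients by blast
qed

end
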